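(* Let $A,r,\beta_0,a,\mu,d>0$ and consider the system $$\dot S=S(A-S)-\beta_0IS,\qquad \dot I=\beta_0IS-(\mu+d)I-\frac{rI}{a+I},\qquad \dot R=\frac{rI}{a+I}-\mu R.$$ Then the region $$\mathcal{M}=\left\{(S,I,R)\in(\mathbb{R}_0^+)^3:\ 0\le S\le A,\ 0\le S+I+R\le \frac{A(\mu+A)}{\mu},\ I,R\ge0\right\}$$ is positively flow-invariant, i.e. every trajectory starting in $\mathcal{M}$ remains in $\mathcal{M}$ for all $t\ge0$.
   Context: $S,I,R$ denote susceptible, infectious and recovered populations; $\mu$ is the natural death rate, $d$ the disease-induced death rate, $r$ the cure rate, $a$ a saturation constant of treatment, $\beta_0$ the transmission rate and $A$ the carrying capacity of susceptibles. $\mathbb{R}_0^+=[0,\infty)$. *)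

theory Defs
  imports "HOL-Analysis.Analysis"
begin

definition regionM :: "real \<Rightarrow> real \<Rightarrow> (real \<times> real \<times> real) set" where
  "regionM A \<mu> = {(S, I, R). 0 \<le> S \<and> 0 \<le> I \<and> 0 \<le> R \<and> S \<le> A \<and>
      0 \<le> S + I + R \<and> S + I + R \<le> A * (\<mu> + A) / \<mu>}"

end

theory Submission
  imports Defs
begin

text \<open>Each of S, I, R, A - S and A (\<mu> + A) / \<mu> - (S + I + R) satisfies a
differential inequality f' \<ge> f h with h continuous wherever f vanishes (for the total
population the infection and treatment terms cancel, and S (A - S) + \<mu> S \<le> A (\<mu> + A)
once 0 \<le> S \<le> A is known). Such an f cannot become negative: just after its last zero
it would be negative with h bounded above by some K, so f(t) exp (- K t) would be
nondecreasing there, starting from 0.\<close>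

lemma exp_weighted_mono:
  fixes f f' :: "real \<Rightarrow> real"
  assumes "a \<le> b" and cont: "continuous_on {a..b} f"
    and der: "\<And>x. a < x \<Longrightarrow> x < b \<Longrightarrow> (f has_real_derivative f' x) (at x)"
    and ge: "\<And>x. a < x \<Longrightarrow> x < b \<Longrightarrow> K * f x \<le> f' x"
  shows "f a * exp (- K * a) \<le> f b * exp (- K * b)"
proof (rule DERIV_nonneg_imp_increasing_open[OF \<open>a \<le> b\<close>])
  fix x assume x: "a < x" "x < b"
  have "((\<lambda>x. f x * exp (- K * x)) has_real_derivative (f' x - K * f x) * exp (- K * x)) (at x)"
    using der[OF x] by (auto intro!: derivative_eq_intros simp: algebra_simps)
  moreover have "0 \<le> (f' x - K * f x) * exp (- K * x)"
    using ge[OF x] by simp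
  ultimately show "\<exists>y. ((\<lambda>x. f x * exp (- K * x)) has_real_derivative y) (at x) \<and> 0 \<le> y"
    by blast
qed (intro continuous_intros cont)

lemma last_zero_before_negative:
  fixes f :: "real \<Rightarrow> real"
  assumes "a \<le> b" "continuous_on {a..b} f" "0 \<le> f a" "f b < 0"
  obtains c where "a \<le> c" "c < b" "f c = 0" "\<And>x. c < x \<Longrightarrow> x \<le> b \<Longrightarrow> f x < 0"
proof -
  define Z where "Z = {a..b} \<inter> f -` {0..}"
  have "closed Z"
    unfolding Z_def by (rule continuous_closed_preimage) (use assms in auto)
  moreover have "bdd_above Z" "a \<in> Z"
    using assms unfolding Z_def by auto
  ultimately have c: "Sup Z \<in> Z" and upper: "\<And>x. x \<in> Z \<Longrightarrow> x \<le> Sup Z"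
    by (auto intro: closed_contains_Sup cSup_upper)
  define c where "c = Sup Z"
  have c_range: "a \<le> c" "c \<le> b" "0 \<le> f c"
    using c unfolding Z_def c_def by auto
  have after: "f x < 0" if "c < x" "x \<le> b" for x
    using upper[of x] that c_range unfolding Z_def c_def by force
  have "c < b"
    using c_range \<open>f b < 0\<close> by (cases "c = b") auto
  have "continuous_on {c..b} f"
    using assms(2) by (rule continuous_on_subset) (use c_range in auto)
  then obtain z where z: "c \<le> z" "z \<le> b" "f z = 0"
    using IVT2'[of f b 0 c] c_range \<open>f b < 0\<close> by auto
  with after have "f c = 0"
    by (cases "z = c") force+
  with \<open>a \<le> c\<close> \<open>c < b\<close> after show ?thesis
    using that by blast
qed

lemma nonneg_if_deriv_ge_mult:
  fixes f f' h :: "real \<Rightarrow> real"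
  assumes der: "\<And>t. 0 \<le> t \<Longrightarrow> (f has_real_derivative f' t) (at t within {0..})"
    and ge: "\<And>t. 0 \<le> t \<Longrightarrow> f t * h t \<le> f' t"
    and cont: "\<And>t. 0 \<le> t \<Longrightarrow> f t = 0 \<Longrightarrow> continuous (at t within {0..}) h"
    and "0 \<le> f 0" "0 \<le> t"
  shows "0 \<le> f t"
proof (rule ccontr)
  assume "\<not> 0 \<le> f t"
  moreover have "continuous_on {0..t} f"
    using DERIV_continuous_on[OF der] by (rule continuous_on_subset) auto
  ultimately obtain c where c: "0 \<le> c" "c < t" "f c = 0" and neg: "\<And>x. c < x \<Longrightarrow> x \<le> t \<Longrightarrow> f x < 0"
    using last_zero_before_negative[of 0 t f] \<open>0 \<le> f 0\<close> \<open>0 \<le> t\<close> by auto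
  obtain \<delta> where "0 < \<delta>" and h_bound: "\<And>x. 0 \<le> x \<Longrightarrow> \<bar>x - c\<bar> < \<delta> \<Longrightarrow> h x < h c + 1"
    using cont[OF c(1,3)] unfolding continuous_within_eps_delta dist_real_def
    by (metis abs_diff_less_iff atLeast_iff zero_less_one)
  define b where "b = min (c + \<delta> / 2) t"
  have "c < b" "b \<le> t" "b - c < \<delta>"
    using \<open>0 < \<delta>\<close> c unfolding b_def by auto
  have "f c * exp (- (h c + 1) * c) \<le> f b * exp (- (h c + 1) * b)"
  proof (rule exp_weighted_mono)
    show "continuous_on {c..b} f"
      using DERIV_continuous_on[OF der] by (rule continuous_on_subset) (use c in auto)
  next
    fix x assume x: "c < x" "x < b"
    then have "at x within {0..} = at x"
      using c by (intro at_within_interior) auto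
    then show "(f has_real_derivative f' x) (at x)"
      using der[of x] x c by simp
    have "f x * (h c + 1) \<le> f x * h x"
      using neg[of x] h_bound[of x] x c \<open>b - c < \<delta>\<close> \<open>b \<le> t\<close> by (intro mult_left_mono_neg) auto
    then show "(h c + 1) * f x \<le> f' x"
      using ge[of x] x c by (simp add: mult.commute)
  qed (use \<open>c < b\<close> in simp)
  moreover have "f b < 0"
    using neg \<open>c < b\<close> \<open>b \<le> t\<close> by simp
  ultimately show False
    using \<open>f c = 0\<close> by (simp add: zero_le_mult_iff)
qed

locale saturated_treatment_SIR =
  fixes A r \<beta>\<^sub>0 a \<mu> d :: real
    and S I R :: "real \<Rightarrow> real"
  assumes a_pos: "0 < a" and r_nonneg: "0 \<le> r" and \<beta>\<^sub>0_nonneg: "0 \<le> \<beta>\<^sub>0"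
    and \<mu>_pos: "0 < \<mu>" and d_nonneg: "0 \<le> d"
    and dS: "\<And>t. t \<ge> 0 \<Longrightarrow>
      (S has_real_derivative (S t * (A - S t) - \<beta>\<^sub>0 * I t * S t)) (at t within {0..})"
    and dI: "\<And>t. t \<ge> 0 \<Longrightarrow>
      (I has_real_derivative (\<beta>\<^sub>0 * I t * S t - (\<mu> + d) * I t - r * I t / (a + I t))) (at t within {0..})"
    and dR: "\<And>t. t \<ge> 0 \<Longrightarrow>
      (R has_real_derivative (r * I t / (a + I t) - \<mu> * R t)) (at t within {0..})"
    and init: "(S 0, I 0, R 0) \<in> regionM A \<mu>"
begin

lemma S_continuous: "0 \<le> t \<Longrightarrow> continuous (at t within {0..}) S"
  using dS by (rule DERIV_continuous)

lemma I_continuous: "0 \<le> t \<Longrightarrow> continuous (at t within {0..}) I"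
  using dI by (rule DERIV_continuous)

lemma I_nonneg:
  assumes "0 \<le> t"
  shows "0 \<le> I t"
proof (rule nonneg_if_deriv_ge_mult[OF dI _ _ _ assms])
  show "I t * (\<beta>\<^sub>0 * S t - (\<mu> + d) - r / (a + I t)) \<le> \<beta>\<^sub>0 * I t * S t - (\<mu> + d) * I t - r * I t / (a + I t)" for t
    by (simp add: algebra_simps)
  show "continuous (at t within {0..}) (\<lambda>t. \<beta>\<^sub>0 * S t - (\<mu> + d) - r / (a + I t))"
    if "0 \<le> t" "I t = 0" for t
    using that a_pos S_continuous I_continuous by (auto intro!: continuous_intros)
  show "0 \<le> I 0"
    using init by (simp add: regionM_def)
qed

lemma S_nonneg:
  assumes "0 \<le> t"
  shows "0 \<le> S t"
proof (rule nonneg_if_deriv_ge_mult[OF dS _ _ _ assms])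
  show "S t * (A - S t - \<beta>\<^sub>0 * I t) \<le> S t * (A - S t) - \<beta>\<^sub>0 * I t * S t" for t
    by (simp add: algebra_simps)
  show "continuous (at t within {0..}) (\<lambda>t. A - S t - \<beta>\<^sub>0 * I t)" if "0 \<le> t" for t
    using that S_continuous I_continuous by (auto intro!: continuous_intros)
  show "0 \<le> S 0"
    using init by (simp add: regionM_def)
qed

lemma S_le_A:
  assumes "0 \<le> t"
  shows "S t \<le> A"
proof -
  have "0 \<le> A - S t"
  proof (rule nonneg_if_deriv_ge_mult[OF _ _ _ _ assms])
    show "((\<lambda>t. A - S t) has_real_derivative - (S t * (A - S t) - \<beta>\<^sub>0 * I t * S t)) (at t within {0..})"
      if "0 \<le> t" for t
      using dS[OF that] by (auto intro!: derivative_eq_intros)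
    show "(A - S t) * - S t \<le> - (S t * (A - S t) - \<beta>\<^sub>0 * I t * S t)" if "0 \<le> t" for t
      using \<beta>\<^sub>0_nonneg I_nonneg[OF that] S_nonneg[OF that] by (simp add: algebra_simps)
    show "continuous (at t within {0..}) (\<lambda>t. - S t)" if "0 \<le> t" for t
      using that S_continuous by (auto intro!: continuous_intros)
    show "0 \<le> A - S 0"
      using init by (simp add: regionM_def)
  qed
  then show ?thesis
    by simp
qed

lemma R_nonneg:
  assumes "0 \<le> t"
  shows "0 \<le> R t"
proof (rule nonneg_if_deriv_ge_mult[OF dR _ _ _ assms])
  show "R t * - \<mu> \<le> r * I t / (a + I t) - \<mu> * R t" if "0 \<le> t" for t
    using r_nonneg a_pos I_nonneg[OF that] by (simp add: algebra_simps)
  show "0 \<le> R 0"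
    using init by (simp add: regionM_def)
qed (auto intro: continuous_intros)

lemma population_bounded:
  assumes "0 \<le> t"
  shows "S t + I t + R t \<le> A * (\<mu> + A) / \<mu>"
proof -
  define C where "C = A * (\<mu> + A) / \<mu>"
  have \<mu>C: "\<mu> * C = \<mu> * A + A * A"
    using \<mu>_pos unfolding C_def by (simp add: field_simps)
  define N' where "N' t = (S t * (A - S t) - \<beta>\<^sub>0 * I t * S t)
    + (\<beta>\<^sub>0 * I t * S t - (\<mu> + d) * I t - r * I t / (a + I t)) + (r * I t / (a + I t) - \<mu> * R t)" for t
  have "0 \<le> C - (S t + I t + R t)"
  proof (rule nonneg_if_deriv_ge_mult[where f' = "\<lambda>t. - N' t", OF _ _ _ _ assms])
    show "((\<lambda>t. C - (S t + I t + R t)) has_real_derivative - N' t) (at t within {0..})"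
      if "0 \<le> t" for t
      unfolding N'_def using dS[OF that] dI[OF that] dR[OF that] by (auto intro!: derivative_eq_intros)
    show "(C - (S t + I t + R t)) * - \<mu> \<le> - N' t" if "0 \<le> t" for t
    proof -
      have "N' t = S t * (A - S t) - d * I t - \<mu> * (S t + I t + R t) + \<mu> * S t"
        unfolding N'_def by (simp add: algebra_simps)
      moreover have "S t * (A - S t) \<le> A * A"
        using S_nonneg[OF that] S_le_A[OF that] by (smt (verit) mult_mono)
      moreover have "\<mu> * S t \<le> \<mu> * A"
        using S_le_A[OF that] \<mu>_pos by simp
      moreover have "0 \<le> d * I t"
        using d_nonneg I_nonneg[OF that] by simp
      ultimately show ?thesis
        using \<mu>C by (simp add: algebra_simps)
    qed
    show "0 \<le> C - (S 0 + I 0 + R 0)"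
      using init by (simp add: regionM_def C_def)
  qed (intro continuous_intros)
  then show ?thesis
    unfolding C_def by simp
qed

end

theorem lemma3p1:
  fixes A r \<beta>\<^sub>0 a \<mu> d :: real
    and S I R :: "real \<Rightarrow> real"
  assumes "A > 0" "r > 0" "\<beta>\<^sub>0 > 0" "a > 0" "\<mu> > 0" "d > 0"
    and dS: "\<And>t. t \<ge> 0 \<Longrightarrow>
      (S has_real_derivative (S t * (A - S t) - \<beta>\<^sub>0 * I t * S t)) (at t within {0..})"
    and dI: "\<And>t. t \<ge> 0 \<Longrightarrow>
      (I has_real_derivative (\<beta>\<^sub>0 * I t * S t - (\<mu> + d) * I t - r * I t / (a + I t))) (at t within {0..})"
    and dR: "\<And>t. t \<ge> 0 \<Longrightarrow>
      (R has_real_derivative (r * I t / (a + I t) - \<mu> * R t)) (at t within {0..})"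
    and init: "(S 0, I 0, R 0) \<in> regionM A \<mu>"
  shows "\<forall>t \<ge> 0. (S t, I t, R t) \<in> regionM A \<mu>"
proof -
  interpret saturated_treatment_SIR A r \<beta>\<^sub>0 a \<mu> d S I R
    using assms by unfold_locales auto
  show ?thesis
    using S_nonneg I_nonneg R_nonneg S_le_A population_bounded
    unfolding regionM_def by (auto intro: add_nonneg_nonneg)
qed

end
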